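(* Let $\sigma:\mathbb R\to\mathbb R$ be a real-analytic function such that $\sigma^{(n_j)}(0)\neq0$ for an infinite sequence of distinct indices $\{n_j\}_{j=1}^\infty$. Let $d\in\mathbb N$ and let $w_1,\dots,w_m\in\mathbb R^d\setminus\{0\}$ satisfy $w_k\neq\pm w_j$ for all $1\leq k<j\leq m$. Then the set of functions on $\mathbb R^d$ $$\{\sigma(w_i^\top x),\ \sigma'(w_i^\top x)x_1,\ \dots,\ \sigma'(w_i^\top x)x_d\}_{i=1}^m$$ (where $x_t$ denotes the $t$-th coordinate of $x$) consists of $m(d+1)$ linearly independent functions. *)

theory Defs
  imports "HOL-Analysis.Analysis"
begin

definition real_analytic :: "(real \<Rightarrow> real) \<Rightarrow> bool" where
  "real_analytic f \<longleftrightarrow>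
     (\<forall>x0. \<exists>r>0. \<exists>a :: nat \<Rightarrow> real.
        \<forall>x. \<bar>x - x0\<bar> < r \<longrightarrow> (\<lambda>n. a n * (x - x0) ^ n) sums f x)"

definition lin_indep_family :: "'i set \<Rightarrow> ('i \<Rightarrow> 'x \<Rightarrow> real) \<Rightarrow> bool" where
  "lin_indep_family I F \<longleftrightarrow>
     (\<forall>c :: 'i \<Rightarrow> real. (\<forall>x. (\<Sum>i\<in>I. c i * F i x) = 0) \<longrightarrow> (\<forall>i\<in>I. c i = 0))"

end

theory Submission
  imports Defs
begin

text \<open>Suppose \<open>\<Sum>\<^sub>i c\<^sub>i \<sigma>(w\<^sub>i \<bullet> x) + \<sigma>'(w\<^sub>i \<bullet> x) (v\<^sub>i \<bullet> x)\<close> vanishes identically.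
  Restrict it to a generic line \<open>x = t y\<close>: the numbers \<open>\<alpha>\<^sub>i = w\<^sub>i \<bullet> y\<close> are nonzero with pairwise
  distinct absolute values, and \<open>\<beta>\<^sub>i = v\<^sub>i \<bullet> y\<close> vanishes only if \<open>v\<^sub>i = 0\<close>. Expanding
  \<open>\<sigma> = \<Sum> a\<^sub>n t\<^sup>n\<close> near \<open>0\<close>, the coefficient of \<open>t\<^sup>n\<close> is \<open>a\<^sub>n \<Sum>\<^sub>i (c\<^sub>i + n \<beta>\<^sub>i/\<alpha>\<^sub>i) \<alpha>\<^sub>i\<^sup>n\<close>.
  For the infinitely many \<open>n\<close> with \<open>a\<^sub>n \<noteq> 0\<close> the sum must vanish, and as \<open>n \<rightarrow> \<infinity>\<close> the
  term with the largest \<open>\<bar>\<alpha>\<^sub>i\<bar>\<close> dominates all others; peeling off dominant terms one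
  by one shows that all \<open>c\<^sub>i\<close> and \<open>\<beta>\<^sub>i\<close>, hence all \<open>v\<^sub>i\<close>, vanish.\<close>

lemma sum_Times_UNIV_option:
  fixes G :: "'a \<times> 'b::finite option \<Rightarrow> 'c::comm_monoid_add"
  shows "(\<Sum>p\<in>A \<times> UNIV. G p) = (\<Sum>i\<in>A. G (i, None) + (\<Sum>s\<in>UNIV. G (i, Some s)))"
proof -
  have "(\<Sum>t\<in>UNIV. G (i, t)) = G (i, None) + (\<Sum>s\<in>UNIV. G (i, Some s))" for i
    by (simp add: UNIV_option_conv sum.reindex)
  moreover have "(\<Sum>p\<in>A \<times> UNIV. G p) = (\<Sum>i\<in>A. \<Sum>t\<in>UNIV. G (i, t))"
    by (simp add: sum.cartesian_product)
  ultimately show ?thesis by simp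
qed

lemma sum_ridge_and_deriv_family:
  fixes c :: "'i \<times> 'd::finite option \<Rightarrow> real" and w :: "'i \<Rightarrow> real ^ 'd"
  shows "(\<Sum>p\<in>A \<times> UNIV. c p * (case p of (i, t) \<Rightarrow> \<lambda>x. case t of
             None \<Rightarrow> g (w i \<bullet> x) | Some s \<Rightarrow> h (w i \<bullet> x) * x $ s) x)
         = (\<Sum>i\<in>A. c (i, None) * g (w i \<bullet> x) + ((\<chi> s. c (i, Some s)) \<bullet> x) * h (w i \<bullet> x))"
  by (simp add: sum_Times_UNIV_option inner_vec_def sum_distrib_right mult_ac)

subsection \<open>Power series and higher derivatives\<close>

lemma diffs_funpow:
  "(diffs ^^ n) a k = (fact (k + n) / fact k) * (a (k + n) :: real)"
proof (induction n arbitrary: k)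
  case 0
  then show ?case by simp
next
  case (Suc n)
  have "(diffs ^^ Suc n) a k = real (Suc k) * (diffs ^^ n) a (Suc k)"
    by (simp add: diffs_def)
  also have "\<dots> = real (Suc k) * (fact (Suc k + n) / fact (Suc k) * a (Suc k + n))"
    using Suc by simp
  also have "\<dots> = fact (k + Suc n) / fact k * a (k + Suc n)"
    by (simp add: fact_Suc del: of_nat_Suc)
  finally show ?case .
qed

lemma powser_sums_higher_deriv:
  fixes f :: "real \<Rightarrow> real"
  assumes sums_f: "\<And>x. \<bar>x\<bar> < r \<Longrightarrow> (\<lambda>k. a k * x ^ k) sums f x"
    and x: "\<bar>x\<bar> < r"
  shows "(\<lambda>k. (diffs ^^ n) a k * x ^ k) sums (deriv ^^ n) f x"
  using x
proof (induction n arbitrary: x)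
  case 0
  then show ?case using sums_f by simp
next
  case (Suc n)
  define b where "b = (diffs ^^ n) a"
  have IH: "\<And>z. \<bar>z\<bar> < r \<Longrightarrow> (\<lambda>k. b k * z ^ k) sums (deriv ^^ n) f z"
    using Suc.IH b_def by simp
  have summable_b: "\<And>z. norm z < r \<Longrightarrow> summable (\<lambda>k. b k * z ^ k)"
    using IH sums_summable by fastforce
  have "((\<lambda>z. \<Sum>k. b k * z ^ k) has_field_derivative (\<Sum>k. diffs b k * x ^ k)) (at x)"
    using termdiffs_strong'[of r b x] summable_b Suc.prems by simp
  then have "((deriv ^^ n) f has_field_derivative (\<Sum>k. diffs b k * x ^ k)) (at x)"
  proof (rule has_field_derivative_transform_within_open[where S = "ball 0 r"])
    show "(\<Sum>k. b k * z ^ k) = (deriv ^^ n) f z" if "z \<in> ball 0 r" for z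
      using sums_unique[OF IH] that by simp
  qed (use Suc.prems in auto)
  then have "(deriv ^^ Suc n) f x = (\<Sum>k. diffs b k * x ^ k)"
    by (simp add: DERIV_imp_deriv)
  moreover have "summable (\<lambda>k. diffs b k * x ^ k)"
    using termdiff_converges[of x r b] summable_b Suc.prems by simp
  ultimately show ?case
    using b_def summable_sums by fastforce
qed

lemma higher_deriv_0_powser:
  fixes f :: "real \<Rightarrow> real"
  assumes "r > 0" and "\<And>x. \<bar>x\<bar> < r \<Longrightarrow> (\<lambda>k. a k * x ^ k) sums f x"
  shows "(deriv ^^ n) f 0 = fact n * a n"
proof -
  have "(\<lambda>k. (diffs ^^ n) a k * 0 ^ k) sums (deriv ^^ n) f 0"
    using assms by (intro powser_sums_higher_deriv) auto
  then have "(deriv ^^ n) f 0 = (diffs ^^ n) a 0" by simp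
  then show ?thesis by (simp add: diffs_funpow)
qed

lemma powser_sums_0_imp_coeff_0:
  assumes "r > 0" and "\<And>x. \<bar>x\<bar> < r \<Longrightarrow> (\<lambda>k. a k * x ^ k) sums (0 :: real)"
  shows "a n = 0"
proof -
  have "(deriv ^^ k) (\<lambda>_::real. 0::real) = (\<lambda>_. 0)" for k
    by (induction k) (auto simp: DERIV_imp_deriv)
  then show ?thesis
    using higher_deriv_0_powser[of r a "\<lambda>_. 0" n] assms by simp
qed

lemma powser_sums_dilation_plus_deriv:
  fixes f :: "real \<Rightarrow> real"
  assumes sums_f: "\<And>x. \<bar>x\<bar> < r \<Longrightarrow> (\<lambda>k. a k * x ^ k) sums f x"
    and "\<alpha> \<noteq> 0" and small: "\<bar>\<alpha> * t\<bar> < r"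
  shows "(\<lambda>n. a n * (c + real n * (b / \<alpha>)) * \<alpha> ^ n * t ^ n)
           sums (c * f (\<alpha> * t) + b * t * deriv f (\<alpha> * t))"
proof -
  have "(\<lambda>n. c * (a n * (\<alpha> * t) ^ n)) sums (c * f (\<alpha> * t))"
    using sums_f[OF small] by (rule sums_mult)
  then have sums_1: "(\<lambda>n. a n * c * \<alpha> ^ n * t ^ n) sums (c * f (\<alpha> * t))"
    by (simp add: power_mult_distrib mult_ac)
  have "(\<lambda>k. (diffs ^^ 1) a k * (\<alpha> * t) ^ k) sums (deriv ^^ 1) f (\<alpha> * t)"
    using sums_f small by (rule powser_sums_higher_deriv)
  then have "(\<lambda>n. diffs a n * (\<alpha> * t) ^ n * (b * t)) sums (deriv f (\<alpha> * t) * (b * t))"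
    by (intro sums_mult2) simp
  moreover have "(\<lambda>n. diffs a n * (\<alpha> * t) ^ n * (b * t))
      = (\<lambda>n. a (Suc n) * (real (Suc n) * (b / \<alpha>)) * \<alpha> ^ Suc n * t ^ Suc n)"
    using \<open>\<alpha> \<noteq> 0\<close> by (simp add: fun_eq_iff diffs_def power_mult_distrib)
  ultimately have "(\<lambda>n. a (Suc n) * (real (Suc n) * (b / \<alpha>)) * \<alpha> ^ Suc n * t ^ Suc n)
                     sums (b * t * deriv f (\<alpha> * t))"
    by (simp only: mult.commute)
  then have sums_2: "(\<lambda>n. a n * (real n * (b / \<alpha>)) * \<alpha> ^ n * t ^ n)
                       sums (b * t * deriv f (\<alpha> * t))"
    using sums_Suc_iff[of "\<lambda>n. a n * (real n * (b / \<alpha>)) * \<alpha> ^ n * t ^ n"] by simp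
  show ?thesis
    using sums_add[OF sums_1 sums_2] by (simp add: algebra_simps)
qed

subsection \<open>Sums of affine multiples of powers\<close>

lemma affine_seq_tendsto_0_on_infinite_imp_0:
  fixes c b :: real
  assumes "infinite S" and "h \<longlonglongrightarrow> 0" and "\<forall>n\<in>S. c + real n * b = h n"
  shows "c = 0 \<and> b = 0"
proof -
  have unbounded: "\<exists>n\<in>S. n \<ge> N" for N
    using assms(1) infinite_nat_iff_unbounded_le by blast
  have "b = 0"
  proof (rule ccontr)
    assume "b \<noteq> 0"
    obtain N where N: "\<And>n. n \<ge> N \<Longrightarrow> \<bar>h n\<bar> < 1"
      using LIMSEQ_D[OF assms(2), of 1] by auto
    obtain n where n: "n \<in> S" "n \<ge> max N (nat \<lceil>(\<bar>c\<bar> + 2) / \<bar>b\<bar>\<rceil>)"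
      using unbounded by blast
    then have "real n * \<bar>b\<bar> \<ge> \<bar>c\<bar> + 2"
      using \<open>b \<noteq> 0\<close> by (simp add: field_simps)
    then have "\<bar>c + real n * b\<bar> \<ge> 2" by (simp add: abs_mult)
    then show False using N n assms(3) by fastforce
  qed
  moreover have "c = 0"
  proof (rule ccontr)
    assume "c \<noteq> 0"
    obtain N where N: "\<And>n. n \<ge> N \<Longrightarrow> \<bar>h n\<bar> < \<bar>c\<bar>"
      using LIMSEQ_D[OF assms(2), of "\<bar>c\<bar>"] \<open>c \<noteq> 0\<close> by auto
    obtain n where "n \<in> S" "n \<ge> N" using unbounded by blast
    then show False using N assms(3) \<open>b = 0\<close> by fastforce
  qed
  ultimately show ?thesis by simp
qed

lemma affine_power_sum_dominant_coeffs_eq_0: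
  fixes \<alpha> c b :: "'i \<Rightarrow> real"
  assumes "finite I" "infinite S" "i0 \<in> I" "\<alpha> i0 \<noteq> 0"
    and dominant: "\<forall>i\<in>I - {i0}. \<bar>\<alpha> i\<bar> < \<bar>\<alpha> i0\<bar>"
    and vanish: "\<forall>n\<in>S. (\<Sum>i\<in>I. (c i + real n * b i) * \<alpha> i ^ n) = 0"
  shows "c i0 = 0 \<and> b i0 = 0"
proof -
  define h where "h n = (\<Sum>i\<in>I - {i0}. (c i + real n * b i) * (\<alpha> i / \<alpha> i0) ^ n)" for n
  have "(\<lambda>n. (c i + real n * b i) * (\<alpha> i / \<alpha> i0) ^ n) \<longlonglongrightarrow> 0" if "i \<in> I - {i0}" for i
  proof -
    have "\<bar>\<alpha> i / \<alpha> i0\<bar> < 1"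
      using dominant that assms(4) by (simp add: abs_divide divide_less_eq)
    then have "(\<lambda>n. c i * (\<alpha> i / \<alpha> i0) ^ n + b i * (real n * (\<alpha> i / \<alpha> i0) ^ n))
                 \<longlonglongrightarrow> c i * 0 + b i * 0"
      by (intro tendsto_intros LIMSEQ_power_zero powser_times_n_limit_0) auto
    then show ?thesis by (simp add: algebra_simps)
  qed
  then have "h \<longlonglongrightarrow> 0"
    unfolding h_def by (intro tendsto_null_sum) auto
  then have "(\<lambda>n. - h n) \<longlonglongrightarrow> 0"
    using tendsto_minus by fastforce
  moreover have "c i0 + real n * b i0 = - h n" if "n \<in> S" for n
  proof -
    have "0 = (\<Sum>i\<in>I. (c i + real n * b i) * \<alpha> i ^ n) / \<alpha> i0 ^ n"
      using vanish that by simp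
    also have "\<dots> = (\<Sum>i\<in>I. (c i + real n * b i) * (\<alpha> i / \<alpha> i0) ^ n)"
      by (simp add: sum_divide_distrib power_divide)
    also have "\<dots> = (c i0 + real n * b i0) + h n"
      unfolding h_def using assms(1,3,4) by (simp add: sum.remove)
    finally show ?thesis by simp
  qed
  ultimately show ?thesis
    using affine_seq_tendsto_0_on_infinite_imp_0[OF \<open>infinite S\<close>] by blast
qed

lemma affine_power_sums_eq_0_imp_coeffs_eq_0:
  fixes \<alpha> c b :: "'i \<Rightarrow> real"
  assumes "finite I" "infinite S"
    and "\<forall>i\<in>I. \<alpha> i \<noteq> 0"
    and "\<forall>i\<in>I. \<forall>j\<in>I. i \<noteq> j \<longrightarrow> \<bar>\<alpha> i\<bar> \<noteq> \<bar>\<alpha> j\<bar>"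
    and "\<forall>n\<in>S. (\<Sum>i\<in>I. (c i + real n * b i) * \<alpha> i ^ n) = 0"
  shows "\<forall>i\<in>I. c i = 0 \<and> b i = 0"
  using assms(1,3-5)
proof (induction I rule: finite_psubset_induct)
  case (psubset I)
  show ?case
  proof (cases "I = {}")
    case False
    have "Max ((\<lambda>i. \<bar>\<alpha> i\<bar>) ` I) \<in> (\<lambda>i. \<bar>\<alpha> i\<bar>) ` I"
      using psubset.hyps False by simp
    then obtain i0 where i0: "i0 \<in> I" "\<bar>\<alpha> i0\<bar> = Max ((\<lambda>i. \<bar>\<alpha> i\<bar>) ` I)"
      by auto
    have "\<forall>i\<in>I - {i0}. \<bar>\<alpha> i\<bar> < \<bar>\<alpha> i0\<bar>"
      using i0 psubset.hyps psubset.prems(2) by (force simp: order.strict_iff_order)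
    then have i0_0: "c i0 = 0 \<and> b i0 = 0"
      using psubset.prems i0(1)
      by (intro affine_power_sum_dominant_coeffs_eq_0[OF psubset.hyps assms(2)]) auto
    have "\<forall>n\<in>S. (\<Sum>i\<in>I - {i0}. (c i + real n * b i) * \<alpha> i ^ n) = 0"
      using psubset.hyps psubset.prems(3) i0(1) i0_0 by (simp add: sum.remove)
    then have "\<forall>i\<in>I - {i0}. c i = 0 \<and> b i = 0"
      using psubset.prems i0(1) by (intro psubset.IH) auto
    then show ?thesis using i0_0 by blast
  qed simp
qed

lemma dilations_with_derivs_independent:
  fixes f :: "real \<Rightarrow> real" and \<alpha> c b :: "'i \<Rightarrow> real"
  assumes "r > 0" and sums_f: "\<And>x. \<bar>x\<bar> < r \<Longrightarrow> (\<lambda>k. a k * x ^ k) sums f x"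
    and "infinite {n. a n \<noteq> 0}" and "finite I"
    and nonzero: "\<forall>i\<in>I. \<alpha> i \<noteq> 0"
    and "\<forall>i\<in>I. \<forall>j\<in>I. i \<noteq> j \<longrightarrow> \<bar>\<alpha> i\<bar> \<noteq> \<bar>\<alpha> j\<bar>"
    and vanish: "\<forall>t. (\<Sum>i\<in>I. c i * f (\<alpha> i * t) + b i * t * deriv f (\<alpha> i * t)) = 0"
  shows "\<forall>i\<in>I. c i = 0 \<and> b i = 0"
proof -
  define \<rho> where "\<rho> = r / (1 + (\<Sum>i\<in>I. \<bar>\<alpha> i\<bar>))"
  have sum_pos: "1 + (\<Sum>i\<in>I. \<bar>\<alpha> i\<bar>) > 0"
    by (simp add: sum_nonneg add_pos_nonneg)
  have small: "\<bar>\<alpha> i * t\<bar> < r" if "\<bar>t\<bar> < \<rho>" "i \<in> I" for i t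
  proof -
    have "\<bar>\<alpha> i\<bar> \<le> 1 + (\<Sum>i\<in>I. \<bar>\<alpha> i\<bar>)"
      using member_le_sum[of i I "\<lambda>i. \<bar>\<alpha> i\<bar>"] that(2) \<open>finite I\<close> by simp
    then have "\<bar>\<alpha> i * t\<bar> \<le> (1 + (\<Sum>i\<in>I. \<bar>\<alpha> i\<bar>)) * \<bar>t\<bar>"
      by (simp add: abs_mult mult_right_mono)
    also have "\<dots> < r"
      using that(1) sum_pos by (simp add: \<rho>_def field_simps)
    finally show ?thesis .
  qed
  define e where "e n = (\<Sum>i\<in>I. a n * (c i + real n * (b i / \<alpha> i)) * \<alpha> i ^ n)" for n
  have "(\<lambda>n. e n * t ^ n) sums 0" if "\<bar>t\<bar> < \<rho>" for t
  proof -
    have "(\<lambda>n. \<Sum>i\<in>I. a n * (c i + real n * (b i / \<alpha> i)) * \<alpha> i ^ n * t ^ n)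
            sums (\<Sum>i\<in>I. c i * f (\<alpha> i * t) + b i * t * deriv f (\<alpha> i * t))"
      using nonzero small that by (intro sums_sum powser_sums_dilation_plus_deriv[OF sums_f]) auto
    then show ?thesis
      using vanish by (simp add: e_def sum_distrib_right)
  qed
  then have e_0: "e n = 0" for n
    using powser_sums_0_imp_coeff_0[of \<rho> e] \<open>r > 0\<close> sum_pos by (simp add: \<rho>_def)
  have "(\<Sum>i\<in>I. (c i + real n * (b i / \<alpha> i)) * \<alpha> i ^ n) = 0" if "a n \<noteq> 0" for n
    using e_0[of n] that by (simp add: e_def mult.assoc flip: sum_distrib_left)
  then have "\<forall>i\<in>I. c i = 0 \<and> b i / \<alpha> i = 0"
    using assms(3-6) by (intro affine_power_sums_eq_0_imp_coeffs_eq_0[where S = "{n. a n \<noteq> 0}"]) auto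
  then show ?thesis
    using nonzero by simp
qed

subsection \<open>Choosing a generic line\<close>

lemma exists_not_orthogonal_to_finite:
  fixes U :: "'a::euclidean_space set"
  assumes "finite U" "0 \<notin> U"
  obtains y where "\<forall>u\<in>U. u \<bullet> y \<noteq> 0"
proof -
  have "negligible (\<Union>u\<in>U. {y. u \<bullet> y = 0})"
    using assms by (intro negligible_Union) (auto intro!: negligible_hyperplane)
  then have "(\<Union>u\<in>U. {y. u \<bullet> y = 0}) \<noteq> UNIV" by auto
  then show ?thesis using that by auto
qed

lemma exists_direction_separating:
  fixes w :: "'i \<Rightarrow> 'a::euclidean_space"
  assumes "finite I" "finite V" "0 \<notin> V"
    and nonzero: "\<forall>i\<in>I. w i \<noteq> 0"
    and distinct: "\<forall>i\<in>I. \<forall>j\<in>I. i \<noteq> j \<longrightarrow> w i \<noteq> w j \<and> w i \<noteq> - w j"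
  obtains y where "\<forall>i\<in>I. w i \<bullet> y \<noteq> 0"
    and "\<forall>i\<in>I. \<forall>j\<in>I. i \<noteq> j \<longrightarrow> \<bar>w i \<bullet> y\<bar> \<noteq> \<bar>w j \<bullet> y\<bar>"
    and "\<forall>v\<in>V. v \<bullet> y \<noteq> 0"
proof -
  define P where "P = {(i, j). i \<in> I \<and> j \<in> I \<and> i \<noteq> j}"
  have "finite P"
    using finite_subset[of P "I \<times> I"] \<open>finite I\<close> by (auto simp: P_def)
  define U where "U = w ` I \<union> (\<lambda>(i, j). w i - w j) ` P \<union> (\<lambda>(i, j). w i + w j) ` P \<union> V"
  have "finite U"
    using \<open>finite P\<close> assms(1,2) by (simp add: U_def)
  moreover have "0 \<notin> U"
    using nonzero distinct \<open>0 \<notin> V\<close> by (auto simp: U_def P_def add_eq_0_iff2)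
  ultimately obtain y where y: "\<forall>u\<in>U. u \<bullet> y \<noteq> 0"
    by (rule exists_not_orthogonal_to_finite)
  have "\<bar>w i \<bullet> y\<bar> \<noteq> \<bar>w j \<bullet> y\<bar>" if "i \<in> I" "j \<in> I" "i \<noteq> j" for i j
  proof -
    have "(i, j) \<in> P" using that by (simp add: P_def)
    then have "(w i - w j) \<bullet> y \<noteq> 0" "(w i + w j) \<bullet> y \<noteq> 0"
      using y unfolding U_def by force+
    then show ?thesis by (auto simp: inner_diff_left inner_add_left abs_eq_iff)
  qed
  then show ?thesis
    using y by (intro that) (auto simp: U_def)
qed

theorem mainTheorem13:
  fixes \<sigma> :: "real \<Rightarrow> real"
    and w :: "nat \<Rightarrow> real ^ 'd"
    and m :: nat
  assumes "real_analytic \<sigma>"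
    and "infinite {n. (deriv ^^ n) \<sigma> 0 \<noteq> 0}"
    and "\<forall>i<m. w i \<noteq> 0"
    and "\<forall>k<m. \<forall>j<m. k < j \<longrightarrow> w k \<noteq> w j \<and> w k \<noteq> - w j"
  shows "lin_indep_family ({..<m} \<times> (UNIV :: 'd option set))
           (\<lambda>(i, t) x. case t of
                None \<Rightarrow> \<sigma> (w i \<bullet> x)
              | Some s \<Rightarrow> deriv \<sigma> (w i \<bullet> x) * x $ s)"
  unfolding lin_indep_family_def
proof (intro allI impI)
  fix c :: "nat \<times> 'd option \<Rightarrow> real"
  define v where "v i = (\<chi> s. c (i, Some s))" for i
  assume "\<forall>x. (\<Sum>p\<in>{..<m} \<times> UNIV. c p * (case p of (i, t) \<Rightarrow> \<lambda>x. case t of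
      None \<Rightarrow> \<sigma> (w i \<bullet> x) | Some s \<Rightarrow> deriv \<sigma> (w i \<bullet> x) * x $ s) x) = 0"
  then have comb_0: "(\<Sum>i\<in>{..<m}. c (i, None) * \<sigma> (w i \<bullet> x) + (v i \<bullet> x) * deriv \<sigma> (w i \<bullet> x)) = 0" for x
    by (simp only: v_def sum_ridge_and_deriv_family)
  obtain r a where "r > 0" and sums_\<sigma>: "\<And>x. \<bar>x\<bar> < r \<Longrightarrow> (\<lambda>k. a k * x ^ k) sums \<sigma> x"
    using assms(1) unfolding real_analytic_def by (metis diff_zero)
  have "infinite {n. a n \<noteq> 0}"
    using assms(2) higher_deriv_0_powser[OF \<open>r > 0\<close> sums_\<sigma>] by simp
  have distinct: "\<forall>i\<in>{..<m}. \<forall>j\<in>{..<m}. i \<noteq> j \<longrightarrow> w i \<noteq> w j \<and> w i \<noteq> - w j"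
    using assms(4) by (metis lessThan_iff linorder_neq_iff minus_minus)
  obtain y where y: "\<forall>i\<in>{..<m}. w i \<bullet> y \<noteq> 0"
      "\<forall>i\<in>{..<m}. \<forall>j\<in>{..<m}. i \<noteq> j \<longrightarrow> \<bar>w i \<bullet> y\<bar> \<noteq> \<bar>w j \<bullet> y\<bar>"
      "\<forall>u\<in>v ` {..<m} - {0}. u \<bullet> y \<noteq> 0"
    by (rule exists_direction_separating[where V = "v ` {..<m} - {0}", OF _ _ _ _ distinct])
      (use assms(3) in auto)
  have "\<forall>t. (\<Sum>i\<in>{..<m}. c (i, None) * \<sigma> ((w i \<bullet> y) * t) + (v i \<bullet> y) * t * deriv \<sigma> ((w i \<bullet> y) * t)) = 0"
    using comb_0[of "t *\<^sub>R y" for t] by (simp add: mult.commute)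
  then have "\<forall>i\<in>{..<m}. c (i, None) = 0 \<and> v i \<bullet> y = 0"
    using y by (intro dilations_with_derivs_independent[OF \<open>r > 0\<close> sums_\<sigma> \<open>infinite {n. a n \<noteq> 0}\<close>]) auto
  then have coeffs_0: "c (i, None) = 0 \<and> v i = 0" if "i < m" for i
    using y(3) that by blast
  show "\<forall>p\<in>{..<m} \<times> UNIV. c p = 0"
  proof clarify
    fix i t assume "i < m"
    then show "c (i, t) = 0"
      using coeffs_0 by (cases t) (auto simp: v_def vec_eq_iff)
  qed
qed

end
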